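(* Let $(X,d)$ be a compact metric space and $F:X\to 2^X$ a continuous, onto set-valued map. The following are equivalent: (a) $F$ has the shadowing property. (b) For every $\varepsilon>0$ there exist $\delta>0$ and $N\in\mathbb N$ such that for every $\delta$-pseudo-orbit $\{x_n\}_{n\ge0}$ of $F$ for which there are points $x_i^N\in F^N(x_i)$ with $d(x_i^N,x_{i+N})<\varepsilon/2$ for all $i\ge0$, the sequence $\{x_{n+N}\}_{n\ge0}$ is $\varepsilon$-shadowed by some $F$-orbit. (c) For every $\varepsilon>0$ there exist $\delta>0$ and $N\in\mathbb N$ such that for every $\delta$-pseudo-orbit $\{x_n\}_{n\ge0}$ of $F$ for which there are points $x_i^N\in F^N(x_i)$ with $d(x_i^N,x_{i+N})<\varepsilon/2$ for all $i\ge0$, the sequence $\{x_n^N\}_{n\ge0}$ is $\varepsilon$-shadowed by some $F$-orbit.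
   Context: $2^X$ is the family of nonempty compact subsets of $X$. $F$ is upper semicontinuous if for every $x$ and open $U\supset F(x)$ there is a neighborhood $V$ of $x$ with $F(y)\subset U$ for $y\in V$; lower semicontinuous if for every $x$ and open $U$ with $F(x)\cap U\ne\emptyset$ there is a neighborhood $V$ of $x$ with $F(y)\cap U\neq\emptyset$ for $y\in V$; continuous if both. $F$ is onto if every $y\in X$ lies in some $F(x)$. For $A\subset X$, $F(A)=\bigcup_{a\in A}F(a)$; $F^1=F$ and $F^{N}(x)=F(F^{N-1}(x))$. A $\delta$-pseudo-orbit of $F$ is $\{x_n\}_{n\ge0}$ with $d(x_{n+1},F(x_n))<\delta$ for all $n$; an $F$-orbit is $(y_n)_{n\ge0}$ with $y_{n+1}\in F(y_n)$; a sequence $\{z_n\}$ is $\varepsilon$-shadowed by the $F$-orbit $(y_n)$ if $d(z_n,y_n)<\varepsilon$ for all $n$. $F$ has the shadowing property if for every $\varepsilon>0$ there is $\delta>0$ such that every $\delta$-pseudo-orbit is $\varepsilon$-shadowed by some $F$-orbit. *)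

theory Defs
  imports "HOL-Analysis.Analysis"
begin

definition set_valued_map :: "'a::metric_space set \<Rightarrow> ('a \<Rightarrow> 'a set) \<Rightarrow> bool" where
  "set_valued_map X F \<longleftrightarrow> (\<forall>x\<in>X. F x \<noteq> {} \<and> compact (F x) \<and> F x \<subseteq> X)"

definition usc_on :: "'a::metric_space set \<Rightarrow> ('a \<Rightarrow> 'a set) \<Rightarrow> bool" where
  "usc_on X F \<longleftrightarrow> (\<forall>x\<in>X. \<forall>U. open U \<and> F x \<subseteq> U \<longrightarrow>
      (\<exists>V. open V \<and> x \<in> V \<and> (\<forall>y\<in>V \<inter> X. F y \<subseteq> U)))"

definition lsc_on :: "'a::metric_space set \<Rightarrow> ('a \<Rightarrow> 'a set) \<Rightarrow> bool" where
  "lsc_on X F \<longleftrightarrow> (\<forall>x\<in>X. \<forall>U. open U \<and> F x \<inter> U \<noteq> {} \<longrightarrow>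
      (\<exists>V. open V \<and> x \<in> V \<and> (\<forall>y\<in>V \<inter> X. F y \<inter> U \<noteq> {})))"

definition svm_continuous_on :: "'a::metric_space set \<Rightarrow> ('a \<Rightarrow> 'a set) \<Rightarrow> bool" where
  "svm_continuous_on X F \<longleftrightarrow> usc_on X F \<and> lsc_on X F"

definition svm_onto :: "'a set \<Rightarrow> ('a \<Rightarrow> 'a set) \<Rightarrow> bool" where
  "svm_onto X F \<longleftrightarrow> (\<forall>y\<in>X. \<exists>x\<in>X. y \<in> F x)"

fun Fpow :: "('a \<Rightarrow> 'a set) \<Rightarrow> nat \<Rightarrow> 'a \<Rightarrow> 'a set" where
  "Fpow F 0 x = {x}"
| "Fpow F (Suc n) x = \<Union> (F ` Fpow F n x)"

definition pseudo_orbit :: "'a::metric_space set \<Rightarrow> ('a \<Rightarrow> 'a set) \<Rightarrow> real \<Rightarrow> (nat \<Rightarrow> 'a) \<Rightarrow> bool" where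
  "pseudo_orbit X F \<delta> x \<longleftrightarrow> (\<forall>n. x n \<in> X) \<and> (\<forall>n. infdist (x (Suc n)) (F (x n)) < \<delta>)"

definition F_orbit :: "'a set \<Rightarrow> ('a \<Rightarrow> 'a set) \<Rightarrow> (nat \<Rightarrow> 'a) \<Rightarrow> bool" where
  "F_orbit X F y \<longleftrightarrow> (\<forall>n. y n \<in> X) \<and> (\<forall>n. y (Suc n) \<in> F (y n))"

definition shadowed_by :: "real \<Rightarrow> (nat \<Rightarrow> 'a::metric_space) \<Rightarrow> (nat \<Rightarrow> 'a) \<Rightarrow> bool" where
  "shadowed_by \<epsilon> z y \<longleftrightarrow> (\<forall>n. dist (z n) (y n) < \<epsilon>)"

definition has_shadowing :: "'a::metric_space set \<Rightarrow> ('a \<Rightarrow> 'a set) \<Rightarrow> bool" where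
  "has_shadowing X F \<longleftrightarrow> (\<forall>\<epsilon>>0. \<exists>\<delta>>0. \<forall>x. pseudo_orbit X F \<delta> x \<longrightarrow>
      (\<exists>y. F_orbit X F y \<and> shadowed_by \<epsilon> x y))"

end

theory Submission
  imports Defs
begin

text \<open>(a) implies (b) and (c) with \<open>N = 1\<close>: shift a shadowing orbit by one step. For the
  converse, a \<open>\<delta>\<close>-pseudo-orbit \<open>z\<close> is prolonged \<open>N\<close> steps into the past, which is possible
  since \<open>F\<close> is onto. On a compact space a continuous \<open>F\<close> is uniformly lower semicontinuous,
  so for small \<open>\<delta>\<close> every pseudo-orbit segment of length \<open>N\<close> ends close to the \<open>N\<close>-th iterate
  of its starting point; this supplies the points \<open>x\<^sub>i\<^sup>N\<close>. Then (b) shadows \<open>z\<close> directly,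
  and (c) shadows the \<open>x\<^sub>i\<^sup>N\<close>, which are \<open>\<epsilon>/2\<close>-close to \<open>z\<close>.\<close>

definition Fpow_tracks :: "('a::metric_space \<Rightarrow> 'a set) \<Rightarrow> nat \<Rightarrow> real \<Rightarrow> (nat \<Rightarrow> 'a) \<Rightarrow> (nat \<Rightarrow> 'a) \<Rightarrow> bool" where
  "Fpow_tracks F N \<eta> x xN \<longleftrightarrow> (\<forall>i. xN i \<in> Fpow F N (x i) \<and> dist (xN i) (x (i + N)) < \<eta>)"

definition tail_shadowing :: "'a::metric_space set \<Rightarrow> ('a \<Rightarrow> 'a set) \<Rightarrow> bool" where
  "tail_shadowing X F \<longleftrightarrow> (\<forall>\<epsilon>>0. \<exists>\<delta>>0. \<exists>N::nat. N \<ge> 1 \<and>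
     (\<forall>x xN. pseudo_orbit X F \<delta> x \<and> Fpow_tracks F N (\<epsilon> / 2) x xN
        \<longrightarrow> (\<exists>y. F_orbit X F y \<and> shadowed_by \<epsilon> (\<lambda>n. x (n + N)) y)))"

definition iterate_shadowing :: "'a::metric_space set \<Rightarrow> ('a \<Rightarrow> 'a set) \<Rightarrow> bool" where
  "iterate_shadowing X F \<longleftrightarrow> (\<forall>\<epsilon>>0. \<exists>\<delta>>0. \<exists>N::nat. N \<ge> 1 \<and>
     (\<forall>x xN. pseudo_orbit X F \<delta> x \<and> Fpow_tracks F N (\<epsilon> / 2) x xN
        \<longrightarrow> (\<exists>y. F_orbit X F y \<and> shadowed_by \<epsilon> xN y)))"

lemma Fpow_subset:
  assumes "set_valued_map X F" "x \<in> X"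
  shows "Fpow F n x \<subseteq> X"
proof (induction n)
  case 0 then show ?case using assms by simp
next
  case (Suc n) then show ?case using assms(1) unfolding set_valued_map_def by auto
qed

lemma infdist_lessE:
  assumes "infdist x S < d" "S \<noteq> {}"
  obtains s where "s \<in> S" "dist x s < d"
proof -
  have "(INF a\<in>S. dist x a) < d" using assms by (simp add: infdist_notempty)
  then show ?thesis using cInf_lessD[of "(\<lambda>a. dist x a) ` S" d] assms(2) that by auto
qed

lemma pseudo_orbit_mono:
  assumes "pseudo_orbit X F \<delta> x" "\<delta> \<le> \<delta>'"
  shows "pseudo_orbit X F \<delta>' x"
  using assms unfolding pseudo_orbit_def by (meson less_le_trans)

lemma F_orbit_shift:
  assumes "F_orbit X F y"
  shows "F_orbit X F (\<lambda>n. y (n + 1))"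
  using assms unfolding F_orbit_def by auto

text \<open>Cover \<open>F a\<close> by finitely many \<open>\<eta>/4\<close>-balls; lower semicontinuity at \<open>a\<close> keeps every ball
  hit by \<open>F b\<close>, upper semicontinuity keeps \<open>F y\<close> inside their union.\<close>
lemma svm_continuous_locally_uniform_lsc:
  assumes sv: "set_valued_map X F" and c: "svm_continuous_on X F" and "\<eta> > 0" and a: "a \<in> X"
  shows "\<exists>W. open W \<and> a \<in> W \<and> (\<forall>y\<in>W \<inter> X. \<forall>b\<in>W \<inter> X. \<forall>u\<in>F y. \<exists>v\<in>F b. dist u v < \<eta>)"
proof -
  have "compact (F a)" using sv a unfolding set_valued_map_def by auto
  moreover have "F a \<subseteq> (\<Union>p\<in>F a. ball p (\<eta>/4))" using \<open>\<eta> > 0\<close> by auto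
  ultimately obtain P where P: "P \<subseteq> F a" "finite P" "F a \<subseteq> (\<Union>p\<in>P. ball p (\<eta>/4))"
    using compactE_image[of "F a" "F a" "\<lambda>p. ball p (\<eta>/4)"] by auto
  have "\<exists>V. open V \<and> a \<in> V \<and> (\<forall>y\<in>V \<inter> X. F y \<inter> ball p (\<eta>/4) \<noteq> {})" if "p \<in> P" for p
  proof -
    have "F a \<inter> ball p (\<eta>/4) \<noteq> {}" using that P(1) \<open>\<eta> > 0\<close> by auto
    then show ?thesis using c a unfolding svm_continuous_on_def lsc_on_def by auto
  qed
  then obtain V where V: "\<And>p. p \<in> P \<Longrightarrow> open (V p) \<and> a \<in> V p \<and> (\<forall>y\<in>V p \<inter> X. F y \<inter> ball p (\<eta>/4) \<noteq> {})"
    by metis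
  obtain V0 where V0: "open V0" "a \<in> V0" "\<forall>y\<in>V0 \<inter> X. F y \<subseteq> (\<Union>p\<in>P. ball p (\<eta>/4))"
    using c a P(3) unfolding svm_continuous_on_def usc_on_def
    by (metis (no_types, lifting) open_UN open_ball)
  show ?thesis
  proof (intro exI[of _ "V0 \<inter> (\<Inter>p\<in>P. V p)"] conjI ballI)
    show "open (V0 \<inter> (\<Inter>p\<in>P. V p))" using V0 V P(2) by (intro open_Int open_INT) auto
    show "a \<in> V0 \<inter> (\<Inter>p\<in>P. V p)" using V0 V by auto
  next
    fix y b u assume y: "y \<in> V0 \<inter> (\<Inter>p\<in>P. V p) \<inter> X" and b: "b \<in> V0 \<inter> (\<Inter>p\<in>P. V p) \<inter> X"
      and u: "u \<in> F y"
    then obtain p where p: "p \<in> P" "dist p u < \<eta>/4" using V0(3) by fastforce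
    then obtain v where v: "v \<in> F b" "dist p v < \<eta>/4" using V b by fastforce
    have "dist u v \<le> dist p u + dist p v" by (rule dist_triangle3)
    then show "\<exists>v\<in>F b. dist u v < \<eta>" using v p \<open>\<eta> > 0\<close> by force
  qed
qed

lemma svm_continuous_uniformly_lsc:
  assumes X: "compact X" and sv: "set_valued_map X F" and c: "svm_continuous_on X F" and "\<eta> > 0"
  shows "\<exists>\<gamma>>0. \<forall>a\<in>X. \<forall>b\<in>X. dist a b < \<gamma> \<longrightarrow> (\<forall>u\<in>F a. \<exists>v\<in>F b. dist u v < \<eta>)"
proof -
  obtain W where W: "\<And>a. a \<in> X \<Longrightarrow> open (W a) \<and> a \<in> W a \<and>
      (\<forall>y\<in>W a \<inter> X. \<forall>b\<in>W a \<inter> X. \<forall>u\<in>F y. \<exists>v\<in>F b. dist u v < \<eta>)"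
    using svm_continuous_locally_uniform_lsc[OF sv c \<open>\<eta> > 0\<close>] by metis
  have cover: "X \<subseteq> \<Union>(W ` X)" and opens: "\<And>G. G \<in> W ` X \<Longrightarrow> open G" using W by auto
  obtain e where "e > 0" and e: "\<And>x. x \<in> X \<Longrightarrow> \<exists>G\<in>W ` X. ball x e \<subseteq> G"
    using Heine_Borel_lemma[OF X cover opens] by blast
  have "\<forall>u\<in>F a. \<exists>v\<in>F b. dist u v < \<eta>" if "a \<in> X" "b \<in> X" "dist a b < e" for a b
  proof -
    obtain c where "c \<in> X" "ball a e \<subseteq> W c" using e[OF \<open>a \<in> X\<close>] by auto
    moreover have "a \<in> ball a e" "b \<in> ball a e" using that \<open>e > 0\<close> by auto
    ultimately show ?thesis using W[OF \<open>c \<in> X\<close>] that(1,2) by blast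
  qed
  then show ?thesis using \<open>e > 0\<close> by blast
qed

lemma pseudo_orbit_segment_near_Fpow:
  assumes X: "compact X" and sv: "set_valued_map X F" and c: "svm_continuous_on X F" and "\<eta> > 0"
  shows "\<exists>\<delta>>0. \<forall>x. (\<forall>k\<le>N. x k \<in> X) \<and> (\<forall>k<N. infdist (x (Suc k)) (F (x k)) < \<delta>)
            \<longrightarrow> (\<exists>w\<in>Fpow F N (x 0). dist w (x N) < \<eta>)"
  using \<open>\<eta> > 0\<close>
proof (induction N arbitrary: \<eta>)
  case 0 then show ?case by (intro exI[of _ 1]) auto
next
  case (Suc N)
  then obtain \<gamma> where "\<gamma> > 0" and \<gamma>: "\<forall>a\<in>X. \<forall>b\<in>X. dist a b < \<gamma> \<longrightarrow> (\<forall>u\<in>F a. \<exists>v\<in>F b. dist u v < \<eta>/2)"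
    using svm_continuous_uniformly_lsc[OF X sv c, of "\<eta>/2"] by auto
  obtain \<delta> where "\<delta> > 0" and \<delta>: "\<forall>x. (\<forall>k\<le>N. x k \<in> X) \<and> (\<forall>k<N. infdist (x (Suc k)) (F (x k)) < \<delta>)
            \<longrightarrow> (\<exists>w\<in>Fpow F N (x 0). dist w (x N) < \<gamma>)"
    using Suc.IH[OF \<open>\<gamma> > 0\<close>] by blast
  show ?case
  proof (intro exI[of _ "min \<delta> (\<eta>/2)"] conjI allI impI)
    show "min \<delta> (\<eta>/2) > 0" using \<open>\<delta> > 0\<close> Suc.prems by simp
    fix x assume H: "(\<forall>k\<le>Suc N. x k \<in> X) \<and> (\<forall>k<Suc N. infdist (x (Suc k)) (F (x k)) < min \<delta> (\<eta>/2))"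
    then have "\<exists>w\<in>Fpow F N (x 0). dist w (x N) < \<gamma>" using \<delta> by auto
    then obtain w where w: "w \<in> Fpow F N (x 0)" "dist (x N) w < \<gamma>" by (auto simp: dist_commute)
    have "x N \<in> X" "x 0 \<in> X" using H by auto
    then have "w \<in> X" "F (x N) \<noteq> {}" using Fpow_subset[OF sv] w sv unfolding set_valued_map_def by auto
    moreover have "infdist (x (Suc N)) (F (x N)) < \<eta>/2" using H by auto
    ultimately obtain q where q: "q \<in> F (x N)" "dist (x (Suc N)) q < \<eta>/2"
      using infdist_lessE by blast
    obtain v where v: "v \<in> F w" "dist q v < \<eta>/2" using \<gamma> w(2) q(1) \<open>x N \<in> X\<close> \<open>w \<in> X\<close> by blast
    have "v \<in> Fpow F (Suc N) (x 0)" using v(1) w(1) by auto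
    moreover have "dist v (x (Suc N)) < \<eta>"
      using dist_triangle[of "x (Suc N)" v q] q(2) v(2) by (simp add: dist_commute)
    ultimately show "\<exists>w\<in>Fpow F (Suc N) (x 0). dist w (x (Suc N)) < \<eta>" by blast
  qed
qed

text \<open>The prepended points are exact preimages under \<open>F\<close>; they meet the \<open>\<delta>\<close>-condition because
  \<open>\<delta> > 0\<close> is forced by the pseudo-orbit \<open>z\<close> itself.\<close>
lemma pseudo_orbit_extend_backwards:
  assumes on: "svm_onto X F" and z: "pseudo_orbit X F \<delta> z"
  obtains x where "pseudo_orbit X F \<delta> x" "\<And>n. x (n + N) = z n"
proof -
  have "\<delta> > 0" using z infdist_nonneg[of "z 1" "F (z 0)"] unfolding pseudo_orbit_def
    by (metis One_nat_def le_less_trans)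
  obtain g where g: "\<And>y. y \<in> X \<Longrightarrow> g y \<in> X \<and> y \<in> F (g y)" using on unfolding svm_onto_def by metis
  have "z 0 \<in> X" using z unfolding pseudo_orbit_def by auto
  then have gX: "(g ^^ m) (z 0) \<in> X" for m by (induction m) (use g in auto)
  define x where "x n = (if N \<le> n then z (n - N) else (g ^^ (N - n)) (z 0))" for n
  have "x n \<in> X" for n using gX z unfolding x_def pseudo_orbit_def by auto
  moreover have "infdist (x (Suc n)) (F (x n)) < \<delta>" for n
  proof (cases "N \<le> n")
    case True
    then have "x (Suc n) = z (Suc (n - N))" "x n = z (n - N)" unfolding x_def by (auto simp: Suc_diff_le)
    then show ?thesis using z unfolding pseudo_orbit_def by auto
  next
    case False
    then have "N - n = Suc (N - Suc n)" by auto
    then have "x (Suc n) \<in> F (x n)"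
      unfolding x_def using False g[OF gX[of "N - Suc n"]] by (auto simp: not_less_eq_eq)
    then show ?thesis using \<open>\<delta> > 0\<close> by simp
  qed
  ultimately show ?thesis using that[of x] unfolding pseudo_orbit_def x_def by auto
qed

lemma pseudo_orbit_tracked_extension:
  assumes X: "compact X" and sv: "set_valued_map X F" and c: "svm_continuous_on X F"
    and on: "svm_onto X F" and "\<eta> > 0"
  obtains \<delta>\<^sub>0 where "\<delta>\<^sub>0 > 0"
    "\<And>z \<delta>. \<delta> \<le> \<delta>\<^sub>0 \<Longrightarrow> pseudo_orbit X F \<delta> z \<Longrightarrow>
       \<exists>x xN. pseudo_orbit X F \<delta> x \<and> (\<forall>n. x (n + N) = z n) \<and> Fpow_tracks F N \<eta> x xN"
proof -
  obtain \<delta>\<^sub>0 where "\<delta>\<^sub>0 > 0" and \<delta>\<^sub>0: "\<forall>x. (\<forall>k\<le>N. x k \<in> X) \<and> (\<forall>k<N. infdist (x (Suc k)) (F (x k)) < \<delta>\<^sub>0)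
            \<longrightarrow> (\<exists>w\<in>Fpow F N (x 0). dist w (x N) < \<eta>)"
    using pseudo_orbit_segment_near_Fpow[OF X sv c \<open>\<eta> > 0\<close>] by blast
  have "\<exists>x xN. pseudo_orbit X F \<delta> x \<and> (\<forall>n. x (n + N) = z n) \<and> Fpow_tracks F N \<eta> x xN"
    if "\<delta> \<le> \<delta>\<^sub>0" "pseudo_orbit X F \<delta> z" for z \<delta>
  proof -
    obtain x where x: "pseudo_orbit X F \<delta> x" "\<And>n. x (n + N) = z n"
      using pseudo_orbit_extend_backwards[OF on \<open>pseudo_orbit X F \<delta> z\<close>] by blast
    have "pseudo_orbit X F \<delta>\<^sub>0 x" using x(1) \<open>\<delta> \<le> \<delta>\<^sub>0\<close> by (rule pseudo_orbit_mono)
    then have "\<exists>w\<in>Fpow F N (x (i + 0)). dist w (x (i + N)) < \<eta>" for i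
      unfolding pseudo_orbit_def by (intro \<delta>\<^sub>0[rule_format, of "\<lambda>k. x (i + k)"]) auto
    then obtain xN where "Fpow_tracks F N \<eta> x xN" unfolding Fpow_tracks_def by (metis add_0_right)
    then show ?thesis using x by blast
  qed
  then show ?thesis using that \<open>\<delta>\<^sub>0 > 0\<close> by blast
qed

lemma has_shadowing_imp_tail_shadowing:
  assumes "has_shadowing X F"
  shows "tail_shadowing X F"
  unfolding tail_shadowing_def
proof (intro allI impI)
  fix \<epsilon> :: real assume "\<epsilon> > 0"
  then obtain \<delta> where "\<delta> > 0" and \<delta>: "\<And>x. pseudo_orbit X F \<delta> x \<Longrightarrow> \<exists>y. F_orbit X F y \<and> shadowed_by \<epsilon> x y"
    using assms unfolding has_shadowing_def by blast
  have "\<exists>y. F_orbit X F y \<and> shadowed_by \<epsilon> (\<lambda>n. x (n + 1)) y" if "pseudo_orbit X F \<delta> x" for x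
    using \<delta>[OF that] F_orbit_shift unfolding shadowed_by_def by blast
  then show "\<exists>\<delta>>0. \<exists>N::nat. N \<ge> 1 \<and> (\<forall>x xN. pseudo_orbit X F \<delta> x \<and> Fpow_tracks F N (\<epsilon> / 2) x xN
        \<longrightarrow> (\<exists>y. F_orbit X F y \<and> shadowed_by \<epsilon> (\<lambda>n. x (n + N)) y))"
    using \<open>\<delta> > 0\<close> by blast
qed

lemma has_shadowing_imp_iterate_shadowing:
  assumes "has_shadowing X F"
  shows "iterate_shadowing X F"
  unfolding iterate_shadowing_def
proof (intro allI impI)
  fix \<epsilon> :: real assume "\<epsilon> > 0"
  then obtain \<delta> where "\<delta> > 0" and \<delta>: "\<And>x. pseudo_orbit X F \<delta> x \<Longrightarrow> \<exists>y. F_orbit X F y \<and> shadowed_by (\<epsilon>/2) x y"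
    using assms unfolding has_shadowing_def by (meson half_gt_zero)
  have "\<exists>y. F_orbit X F y \<and> shadowed_by \<epsilon> xN y"
    if x: "pseudo_orbit X F \<delta> x" and xN: "Fpow_tracks F 1 (\<epsilon> / 2) x xN" for x xN
  proof -
    obtain y where y: "F_orbit X F y" "shadowed_by (\<epsilon>/2) x y" using \<delta>[OF x] by blast
    have "dist (xN n) (y (n + 1)) < \<epsilon>" for n
    proof -
      have "dist (xN n) (x (n + 1)) < \<epsilon>/2" "dist (x (n + 1)) (y (n + 1)) < \<epsilon>/2"
        using xN y(2) unfolding Fpow_tracks_def shadowed_by_def by auto
      then show ?thesis using dist_triangle[of "xN n" "y (n + 1)" "x (n + 1)"] by linarith
    qed
    then show ?thesis using F_orbit_shift[OF y(1)] unfolding shadowed_by_def by blast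
  qed
  then show "\<exists>\<delta>>0. \<exists>N::nat. N \<ge> 1 \<and> (\<forall>x xN. pseudo_orbit X F \<delta> x \<and> Fpow_tracks F N (\<epsilon> / 2) x xN
        \<longrightarrow> (\<exists>y. F_orbit X F y \<and> shadowed_by \<epsilon> xN y))"
    using \<open>\<delta> > 0\<close> by blast
qed

lemma tail_shadowing_imp_has_shadowing:
  assumes X: "compact X" and sv: "set_valued_map X F" and c: "svm_continuous_on X F"
    and on: "svm_onto X F" and B: "tail_shadowing X F"
  shows "has_shadowing X F"
  unfolding has_shadowing_def
proof (intro allI impI)
  fix \<epsilon> :: real assume "\<epsilon> > 0"
  then obtain \<delta> N where "\<delta> > 0" and \<delta>: "\<forall>x xN. pseudo_orbit X F \<delta> x \<and> Fpow_tracks F N (\<epsilon> / 2) x xN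
      \<longrightarrow> (\<exists>y. F_orbit X F y \<and> shadowed_by \<epsilon> (\<lambda>n. x (n + N)) y)"
    using B unfolding tail_shadowing_def by blast
  obtain \<delta>\<^sub>0 where "\<delta>\<^sub>0 > 0" and \<delta>\<^sub>0: "\<And>z \<delta>'. \<delta>' \<le> \<delta>\<^sub>0 \<Longrightarrow> pseudo_orbit X F \<delta>' z \<Longrightarrow>
       \<exists>x xN. pseudo_orbit X F \<delta>' x \<and> (\<forall>n. x (n + N) = z n) \<and> Fpow_tracks F N (\<epsilon> / 2) x xN"
    using pseudo_orbit_tracked_extension[OF X sv c on, of "\<epsilon> / 2" N] \<open>\<epsilon> > 0\<close> by auto
  have "\<exists>y. F_orbit X F y \<and> shadowed_by \<epsilon> z y" if z: "pseudo_orbit X F (min \<delta> \<delta>\<^sub>0) z" for z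
  proof -
    obtain x xN where x: "pseudo_orbit X F (min \<delta> \<delta>\<^sub>0) x" "\<forall>n. x (n + N) = z n"
        "Fpow_tracks F N (\<epsilon> / 2) x xN"
      using \<delta>\<^sub>0[OF _ z] by auto
    have "pseudo_orbit X F \<delta> x" using x(1) by (rule pseudo_orbit_mono) simp
    then obtain y where "F_orbit X F y" "shadowed_by \<epsilon> (\<lambda>n. x (n + N)) y" using \<delta> x(3) by blast
    then show ?thesis using x(2) by auto
  qed
  then show "\<exists>\<delta>>0. \<forall>z. pseudo_orbit X F \<delta> z \<longrightarrow> (\<exists>y. F_orbit X F y \<and> shadowed_by \<epsilon> z y)"
    using \<open>\<delta> > 0\<close> \<open>\<delta>\<^sub>0 > 0\<close> by (intro exI[of _ "min \<delta> \<delta>\<^sub>0"]) auto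
qed

lemma iterate_shadowing_imp_has_shadowing:
  assumes X: "compact X" and sv: "set_valued_map X F" and c: "svm_continuous_on X F"
    and on: "svm_onto X F" and C: "iterate_shadowing X F"
  shows "has_shadowing X F"
  unfolding has_shadowing_def
proof (intro allI impI)
  fix \<epsilon> :: real assume "\<epsilon> > 0"
  then have "\<epsilon> / 2 > 0" by simp
  then obtain \<delta> N where "\<delta> > 0" and \<delta>: "\<forall>x xN. pseudo_orbit X F \<delta> x \<and> Fpow_tracks F N (\<epsilon> / 2 / 2) x xN
      \<longrightarrow> (\<exists>y. F_orbit X F y \<and> shadowed_by (\<epsilon> / 2) xN y)"
    using C unfolding iterate_shadowing_def by blast
  have "\<epsilon> / 2 / 2 = \<epsilon> / 4" by simp
  note \<delta> = \<delta>[unfolded this]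
  obtain \<delta>\<^sub>0 where "\<delta>\<^sub>0 > 0" and \<delta>\<^sub>0: "\<And>z \<delta>'. \<delta>' \<le> \<delta>\<^sub>0 \<Longrightarrow> pseudo_orbit X F \<delta>' z \<Longrightarrow>
       \<exists>x xN. pseudo_orbit X F \<delta>' x \<and> (\<forall>n. x (n + N) = z n) \<and> Fpow_tracks F N (\<epsilon> / 4) x xN"
    using pseudo_orbit_tracked_extension[OF X sv c on, of "\<epsilon> / 4" N] \<open>\<epsilon> > 0\<close> by auto
  have "\<exists>y. F_orbit X F y \<and> shadowed_by \<epsilon> z y" if z: "pseudo_orbit X F (min \<delta> \<delta>\<^sub>0) z" for z
  proof -
    obtain x xN where x: "pseudo_orbit X F (min \<delta> \<delta>\<^sub>0) x" "\<forall>n. x (n + N) = z n"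
        "Fpow_tracks F N (\<epsilon> / 4) x xN"
      using \<delta>\<^sub>0[OF _ z] by auto
    have "pseudo_orbit X F \<delta> x" using x(1) by (rule pseudo_orbit_mono) simp
    then obtain y where y: "F_orbit X F y" "shadowed_by (\<epsilon> / 2) xN y" using \<delta> x(3) by blast
    have "dist (z n) (y n) < \<epsilon>" for n
    proof -
      have "dist (x (n + N)) (xN n) < \<epsilon>/4" "dist (xN n) (y n) < \<epsilon>/2"
        using x(3) y(2) unfolding Fpow_tracks_def shadowed_by_def by (auto simp: dist_commute)
      then have "dist (x (n + N)) (y n) < \<epsilon>"
        using dist_triangle[of "x (n + N)" "y n" "xN n"] \<open>\<epsilon> > 0\<close> by linarith
      then show ?thesis using x(2) by simp
    qed
    then show ?thesis using y(1) unfolding shadowed_by_def by blast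
  qed
  then show "\<exists>\<delta>>0. \<forall>z. pseudo_orbit X F \<delta> z \<longrightarrow> (\<exists>y. F_orbit X F y \<and> shadowed_by \<epsilon> z y)"
    using \<open>\<delta> > 0\<close> \<open>\<delta>\<^sub>0 > 0\<close> by (intro exI[of _ "min \<delta> \<delta>\<^sub>0"]) auto
qed

theorem proposition3p19:
  fixes X :: "'a::metric_space set" and F :: "'a \<Rightarrow> 'a set"
  assumes "compact X"
    and "set_valued_map X F"
    and "svm_continuous_on X F"
    and "svm_onto X F"
  shows "(has_shadowing X F \<longleftrightarrow>
           (\<forall>\<epsilon>>0. \<exists>\<delta>>0. \<exists>N::nat. N \<ge> 1 \<and>
              (\<forall>x xN. pseudo_orbit X F \<delta> x \<and>
                  (\<forall>i. xN i \<in> Fpow F N (x i) \<and> dist (xN i) (x (i + N)) < \<epsilon> / 2)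
                \<longrightarrow> (\<exists>y. F_orbit X F y \<and> shadowed_by \<epsilon> (\<lambda>n. x (n + N)) y))))
       \<and> (has_shadowing X F \<longleftrightarrow>
           (\<forall>\<epsilon>>0. \<exists>\<delta>>0. \<exists>N::nat. N \<ge> 1 \<and>
              (\<forall>x xN. pseudo_orbit X F \<delta> x \<and>
                  (\<forall>i. xN i \<in> Fpow F N (x i) \<and> dist (xN i) (x (i + N)) < \<epsilon> / 2)
                \<longrightarrow> (\<exists>y. F_orbit X F y \<and> shadowed_by \<epsilon> xN y))))"
proof -
  have "has_shadowing X F \<longleftrightarrow> tail_shadowing X F"
    by (blast intro: has_shadowing_imp_tail_shadowing tail_shadowing_imp_has_shadowing[OF assms])
  moreover have "has_shadowing X F \<longleftrightarrow> iterate_shadowing X F"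
    by (blast intro: has_shadowing_imp_iterate_shadowing iterate_shadowing_imp_has_shadowing[OF assms])
  ultimately show ?thesis
    unfolding tail_shadowing_def iterate_shadowing_def Fpow_tracks_def by (rule conjI)
qed

end
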